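(* Let $n\geq 5$. Every optimal anticode of diameter $2$ in $S_n$ with respect to the Kendall's $\tau$-distance is a sphere of radius $1$, i.e., a set of the form $\{\pi\in S_n : d_K(\sigma,\pi)\leq 1\}$ for some $\sigma\in S_n$; its size is $n$.
   Context: $S_n$ denotes the set of all permutations of $[n]=\{1,\dots,n\}$, written $\sigma=[\sigma(1),\dots,\sigma(n)]$. An adjacent transposition applied to $\sigma$ exchanges the entries in positions $i$ and $i+1$ for some $1\leq i\leq n-1$. The Kendall's $\tau$-distance $d_K(\sigma,\pi)$ is the minimum number of adjacent transpositions needed to transform $\sigma$ into $\pi$. An anticode of diameter $D$ is a subset $\mathcal{A}\subseteq S_n$ with $d_K(x,y)\leq D$ for all $x,y\in\mathcal{A}$; it is optimal if it has the largest possible size among all anticodes of diameter $D$ in $S_n$. *)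

theory Defs
  imports "HOL-Combinatorics.Permutations"
begin

text \<open>S_n: permutations of {1..n}, as functions nat => nat fixing everything outside {1..n};
  sigma i is the entry in position i.\<close>
definition perms :: "nat \<Rightarrow> (nat \<Rightarrow> nat) set" where
  "perms n = {\<sigma>. \<sigma> permutes {1..n}}"

definition adj_rel :: "nat \<Rightarrow> ((nat \<Rightarrow> nat) \<times> (nat \<Rightarrow> nat)) set" where
  "adj_rel n = {(\<sigma>, \<pi>). \<exists>i. 1 \<le> i \<and> i \<le> n - 1 \<and>
                  \<pi> = \<sigma>(i := \<sigma> (Suc i), Suc i := \<sigma> i)}"

definition dK :: "nat \<Rightarrow> (nat \<Rightarrow> nat) \<Rightarrow> (nat \<Rightarrow> nat) \<Rightarrow> nat" where
  "dK n \<sigma> \<pi> = (LEAST k. (\<sigma>, \<pi>) \<in> adj_rel n ^^ k)"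

definition anticode :: "nat \<Rightarrow> nat \<Rightarrow> (nat \<Rightarrow> nat) set \<Rightarrow> bool" where
  "anticode n D A \<longleftrightarrow> A \<subseteq> perms n \<and> (\<forall>x\<in>A. \<forall>y\<in>A. dK n x y \<le> D)"

definition optimal_anticode :: "nat \<Rightarrow> nat \<Rightarrow> (nat \<Rightarrow> nat) set \<Rightarrow> bool" where
  "optimal_anticode n D A \<longleftrightarrow> anticode n D A \<and> (\<forall>B. anticode n D B \<longrightarrow> card B \<le> card A)"

definition sphere_K :: "nat \<Rightarrow> (nat \<Rightarrow> nat) \<Rightarrow> nat \<Rightarrow> (nat \<Rightarrow> nat) set" where
  "sphere_K n \<sigma> r = {\<pi> \<in> perms n. dK n \<sigma> \<pi> \<le> r}"

end

theory Submission
  imports Defs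
begin

text \<open>Right multiplication by an adjacent transposition flips the sign of a permutation.
  Hence in an anticode of diameter 2 any two elements of opposite sign are adjacent, and two
  distinct elements of equal sign differ by two distinct adjacent transpositions; such a pair has
  at most two common neighbours. So if both sign classes of \<open>A\<close> contain two elements then
  \<open>|A| \<le> 4\<close>, and if one class is a single permutation then \<open>A\<close> lies in the sphere of radius 1
  around it. If all of \<open>A\<close> has one sign, fix \<open>a \<in> A\<close>: for every other \<open>b \<in> A\<close> the inversion
  sets of \<open>a\<close> and \<open>b\<close> differ in exactly two pairs of values, and these two-element sets meet
  pairwise in one pair, so at least four of them share a pair \<open>p\<close>. If \<open>p\<close> occupies adjacent
  positions \<open>k, k + 1\<close> in \<open>a\<close>, then \<open>A\<close> lies in the sphere around \<open>a \<circ> (k k+1)\<close>; otherwise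
  \<open>|A| \<le> 3\<close>. Since spheres of radius 1 have \<open>n\<close> elements, an optimal anticode has at least
  \<open>n \<ge> 5\<close> elements and therefore is such a sphere.\<close>

section \<open>Adjacent transpositions and the Kendall distance\<close>

definition adj_swap :: "nat \<Rightarrow> nat \<Rightarrow> nat" where
  "adj_swap i = transpose i (Suc i)"

lemma adj_swap_apply: "adj_swap i t = (if t = i then Suc i else if t = Suc i then i else t)"
  by (simp add: adj_swap_def transpose_def)

lemma adj_swap_adj_swap [simp]: "adj_swap i (adj_swap i t) = t"
  by (simp add: adj_swap_apply)

lemma comp_adj_swap_adj_swap [simp]: "f \<circ> adj_swap i \<circ> adj_swap i = f"
  by (simp add: fun_eq_iff)

lemma adj_swap_permutes: "1 \<le> i \<Longrightarrow> i < n \<Longrightarrow> adj_swap i permutes {1..n}"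
  unfolding adj_swap_def by (rule permutes_swap_id) auto

lemma adj_rel_iff: "(\<sigma>, \<pi>) \<in> adj_rel n \<longleftrightarrow> (\<exists>i. 1 \<le> i \<and> i \<le> n - 1 \<and> \<pi> = \<sigma> \<circ> adj_swap i)"
proof -
  have "\<sigma>(i := \<sigma> (Suc i), Suc i := \<sigma> i) = \<sigma> \<circ> adj_swap i" for i
    by (auto simp: fun_eq_iff adj_swap_apply)
  then show ?thesis by (simp add: adj_rel_def)
qed

lemma adj_rel_sym: "(\<sigma>, \<pi>) \<in> adj_rel n \<Longrightarrow> (\<pi>, \<sigma>) \<in> adj_rel n"
  unfolding adj_rel_iff by (metis comp_adj_swap_adj_swap)

lemma perms_comp_adj_swap: "\<sigma> \<in> perms n \<Longrightarrow> 1 \<le> i \<Longrightarrow> i \<le> n - 1 \<Longrightarrow> \<sigma> \<circ> adj_swap i \<in> perms n"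
  unfolding perms_def
    using adj_swap_permutes[of i n] permutes_compose[of "adj_swap i" "{1..n}" \<sigma>] by simp

lemma adj_rel_perms: "(\<sigma>, \<pi>) \<in> adj_rel n \<Longrightarrow> \<sigma> \<in> perms n \<Longrightarrow> \<pi> \<in> perms n"
  unfolding adj_rel_iff using perms_comp_adj_swap by blast

lemma finite_perms: "finite (perms n)"
  unfolding perms_def using finite_permutations[of "{1..n}"] by simp

lemma inj_perms: "\<sigma> \<in> perms n \<Longrightarrow> inj \<sigma>"
  unfolding perms_def using permutes_inj by blast

lemma bij_perms: "\<sigma> \<in> perms n \<Longrightarrow> bij \<sigma>"
  unfolding perms_def using permutes_bij by blast

lemma relpow_adj_rel_comp_left:
  "(\<sigma>, \<pi>) \<in> adj_rel n ^^ k \<Longrightarrow> (\<tau> \<circ> \<sigma>, \<tau> \<circ> \<pi>) \<in> adj_rel n ^^ k"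
proof (induction k arbitrary: \<pi>)
  case 0
  then show ?case by simp
next
  case (Suc k)
  then obtain \<rho> where \<rho>: "(\<sigma>, \<rho>) \<in> adj_rel n ^^ k" "(\<rho>, \<pi>) \<in> adj_rel n" by auto
  then have "(\<tau> \<circ> \<rho>, \<tau> \<circ> \<pi>) \<in> adj_rel n" unfolding adj_rel_iff by (auto simp: o_assoc)
  with Suc.IH[OF \<rho>(1)] show ?case by (meson relpow_Suc_I)
qed

text \<open>Since \<open>dK\<close> is defined by \<open>LEAST\<close>, it is meaningful only because adjacent transpositions
  connect all of \<open>perms n\<close>. This is bubble sort: the entry \<open>N\<close> is carried to position \<open>N\<close>,
  then induction on \<open>N\<close>; keeping \<open>N \<le> n\<close> makes every step a step of \<open>adj_rel n\<close>.\<close>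

lemma relpow_adj_rel_move_to_last:
  assumes "\<rho> permutes {1..N}" "N \<le> n" "j \<in> {1..N}" "\<rho> j = N"
  shows "\<exists>k \<rho>'. (\<rho>, \<rho>') \<in> adj_rel n ^^ k \<and> \<rho>' permutes {1..N} \<and> \<rho>' N = N"
  using assms
proof (induction "N - j" arbitrary: \<rho> j)
  case 0
  then show ?case by (intro exI[of _ 0] exI[of _ \<rho>]) auto
next
  case (Suc d)
  define \<rho>1 where "\<rho>1 = \<rho> \<circ> adj_swap j"
  have j: "1 \<le> j" "j < N" using Suc by auto
  have "\<rho>1 permutes {1..N}"
    unfolding \<rho>1_def using Suc.prems(1) adj_swap_permutes[OF j] permutes_compose by blast
  moreover have "\<rho>1 (Suc j) = N" unfolding \<rho>1_def using Suc.prems by (simp add: adj_swap_apply)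
  moreover have "d = N - Suc j" using Suc.hyps(2) by simp
  ultimately obtain k \<rho>' where "(\<rho>1, \<rho>') \<in> adj_rel n ^^ k" "\<rho>' permutes {1..N}" "\<rho>' N = N"
    using Suc.hyps(1)[of "Suc j" \<rho>1] Suc.prems(2) j by auto
  moreover have "(\<rho>, \<rho>1) \<in> adj_rel n" unfolding adj_rel_iff \<rho>1_def using Suc.prems(2) j by auto
  ultimately show ?case by (blast intro: relpow_Suc_I2)
qed

lemma relpow_adj_rel_to_id:
  "\<rho> permutes {1..N} \<Longrightarrow> N \<le> n \<Longrightarrow> \<exists>k. (\<rho>, id) \<in> adj_rel n ^^ k"
proof (induction N arbitrary: \<rho>)
  case 0
  then have "\<rho> = id" by simp
  then show ?case by (intro exI[of _ 0]) simp
next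
  case (Suc N)
  define j where "j = inv \<rho> (Suc N)"
  have "\<rho> j = Suc N" unfolding j_def using Suc.prems by (simp add: permutes_inverses)
  moreover have "j \<in> {1..Suc N}"
    using permutes_not_in[OF Suc.prems(1), of j] \<open>\<rho> j = Suc N\<close> by force
  ultimately obtain k \<rho>' where k: "(\<rho>, \<rho>') \<in> adj_rel n ^^ k" and
    \<rho>': "\<rho>' permutes {1..Suc N}" "\<rho>' (Suc N) = Suc N"
    using relpow_adj_rel_move_to_last[OF Suc.prems] by blast
  have "\<rho>' permutes {1..N}" using \<rho>' unfolding permutes_def
    by (metis atLeastAtMost_iff le_Suc_eq)
  then obtain k' where "(\<rho>', id) \<in> adj_rel n ^^ k'" using Suc.IH Suc.prems(2) by fastforce
  with k show ?case using relpow_trans by metis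
qed

lemma relpow_adj_rel_connected:
  assumes "\<sigma> \<in> perms n" "\<pi> \<in> perms n"
  shows "\<exists>k. (\<sigma>, \<pi>) \<in> adj_rel n ^^ k"
proof -
  have "inv \<pi> \<circ> \<sigma> permutes {1..n}"
    using assms unfolding perms_def by (simp add: permutes_compose permutes_inv)
  then obtain k where "(inv \<pi> \<circ> \<sigma>, id) \<in> adj_rel n ^^ k" using relpow_adj_rel_to_id by blast
  from relpow_adj_rel_comp_left[OF this, of \<pi>] show ?thesis
    using assms(2) unfolding perms_def by (auto simp: o_assoc permutes_inv_o)
qed

lemma dK_le_relpow: "(\<sigma>, \<pi>) \<in> adj_rel n ^^ k \<Longrightarrow> dK n \<sigma> \<pi> \<le> k"
  unfolding dK_def by (rule Least_le)

lemma relpow_dK: "\<sigma> \<in> perms n \<Longrightarrow> \<pi> \<in> perms n \<Longrightarrow> (\<sigma>, \<pi>) \<in> adj_rel n ^^ dK n \<sigma> \<pi>"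
  unfolding dK_def using relpow_adj_rel_connected by (meson LeastI_ex)

section \<open>Spheres of radius one\<close>

lemma dK_le_1_iff:
  assumes "\<sigma> \<in> perms n" "\<pi> \<in> perms n"
  shows "dK n \<sigma> \<pi> \<le> 1 \<longleftrightarrow> \<pi> = \<sigma> \<or> (\<sigma>, \<pi>) \<in> adj_rel n"
proof
  assume "dK n \<sigma> \<pi> \<le> 1"
  then consider "dK n \<sigma> \<pi> = 0" | "dK n \<sigma> \<pi> = 1" by linarith
  then show "\<pi> = \<sigma> \<or> (\<sigma>, \<pi>) \<in> adj_rel n"
    using relpow_dK[OF assms] by cases auto
next
  assume "\<pi> = \<sigma> \<or> (\<sigma>, \<pi>) \<in> adj_rel n"
  then have "(\<sigma>, \<pi>) \<in> adj_rel n ^^ 0 \<or> (\<sigma>, \<pi>) \<in> adj_rel n ^^ 1" by auto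
  then obtain k where "k \<le> 1" "(\<sigma>, \<pi>) \<in> adj_rel n ^^ k" by blast
  then show "dK n \<sigma> \<pi> \<le> 1" by (meson dK_le_relpow order_trans)
qed

lemma mem_sphere_K_1_iff:
  "\<sigma> \<in> perms n \<Longrightarrow> \<pi> \<in> sphere_K n \<sigma> 1 \<longleftrightarrow> \<pi> = \<sigma> \<or> (\<sigma>, \<pi>) \<in> adj_rel n"
  unfolding sphere_K_def using dK_le_1_iff adj_rel_perms by blast

lemma sphere_K_1_eq:
  "\<sigma> \<in> perms n \<Longrightarrow> sphere_K n \<sigma> 1 = insert \<sigma> ((\<lambda>i. \<sigma> \<circ> adj_swap i) ` {1..n - 1})"
  using mem_sphere_K_1_iff[of \<sigma> n] unfolding adj_rel_iff by auto

lemma card_sphere_K_1: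
  assumes "\<sigma> \<in> perms n" "1 \<le> n"
  shows "card (sphere_K n \<sigma> 1) = n"
proof -
  have "inj_on (\<lambda>i. \<sigma> \<circ> adj_swap i) {1..n - 1}"
  proof (rule inj_onI)
    fix i j assume "\<sigma> \<circ> adj_swap i = \<sigma> \<circ> adj_swap j"
    then have "adj_swap i i = adj_swap j i"
      using inj_perms[OF assms(1)] by (metis comp_apply injD)
    then show "i = j" by (auto simp: adj_swap_apply split: if_splits)
  qed
  moreover have "\<sigma> \<noteq> \<sigma> \<circ> adj_swap i" for i
  proof
    assume "\<sigma> = \<sigma> \<circ> adj_swap i"
    then have "\<sigma> i = \<sigma> (Suc i)" by (metis adj_swap_apply comp_apply)
    then show False using inj_perms[OF assms(1)] by (simp add: inj_eq)
  qed
  ultimately show ?thesis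
    using assms unfolding sphere_K_1_eq[OF assms(1)] by (simp add: card_image image_iff)
qed

lemma anticode_sphere_K_1:
  assumes "\<rho> \<in> perms n"
  shows "anticode n 2 (sphere_K n \<rho> 1)"
  unfolding anticode_def
proof (intro conjI ballI)
  show "sphere_K n \<rho> 1 \<subseteq> perms n" unfolding sphere_K_def by auto
  have near: "\<exists>a \<le> 1. (\<tau>, \<rho>) \<in> adj_rel n ^^ a \<and> (\<rho>, \<tau>) \<in> adj_rel n ^^ a"
    if "\<tau> \<in> sphere_K n \<rho> 1" for \<tau>
  proof (cases "\<tau> = \<rho>")
    case True
    then show ?thesis by (intro exI[of _ 0]) auto
  next
    case False
    then have "(\<rho>, \<tau>) \<in> adj_rel n" using that mem_sphere_K_1_iff[OF assms] by blast
    then show ?thesis by (intro exI[of _ 1]) (auto intro: adj_rel_sym)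
  qed
  fix \<sigma> \<pi> assume "\<sigma> \<in> sphere_K n \<rho> 1" "\<pi> \<in> sphere_K n \<rho> 1"
  then obtain a b where "a \<le> 1" "b \<le> 1" "(\<sigma>, \<rho>) \<in> adj_rel n ^^ a" "(\<rho>, \<pi>) \<in> adj_rel n ^^ b"
    using near by blast
  then have "dK n \<sigma> \<pi> \<le> a + b" by (meson dK_le_relpow relpow_trans)
  with \<open>a \<le> 1\<close> \<open>b \<le> 1\<close> show "dK n \<sigma> \<pi> \<le> 2" by linarith
qed

lemma anticodeD: "anticode n D A \<Longrightarrow> \<sigma> \<in> A \<Longrightarrow> \<pi> \<in> A \<Longrightarrow> \<sigma> \<in> perms n \<and> \<pi> \<in> perms n \<and> dK n \<sigma> \<pi> \<le> D"
  unfolding anticode_def by blast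

lemma dK_le_2_cases:
  assumes "\<sigma> \<in> perms n" "\<pi> \<in> perms n" "dK n \<sigma> \<pi> \<le> 2"
  obtains "\<pi> = \<sigma>" | "(\<sigma>, \<pi>) \<in> adj_rel n"
    | i j where "1 \<le> i" "i \<le> n - 1" "1 \<le> j" "j \<le> n - 1" "i \<noteq> j"
        "\<pi> = \<sigma> \<circ> adj_swap i \<circ> adj_swap j"
proof -
  have path: "(\<sigma>, \<pi>) \<in> adj_rel n ^^ dK n \<sigma> \<pi>" using relpow_dK[OF assms(1,2)] .
  consider "dK n \<sigma> \<pi> \<le> 1" | "dK n \<sigma> \<pi> = 2" using assms(3) by linarith
  then show thesis
  proof cases
    case 1
    then show thesis using that(1,2) dK_le_1_iff[OF assms(1,2)] by blast
  next
    case 2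
    then obtain \<rho> where "(\<sigma>, \<rho>) \<in> adj_rel n" "(\<rho>, \<pi>) \<in> adj_rel n"
      using path by (auto simp: numeral_2_eq_2)
    then obtain i j where "1 \<le> i" "i \<le> n - 1" "1 \<le> j" "j \<le> n - 1"
      "\<pi> = \<sigma> \<circ> adj_swap i \<circ> adj_swap j"
      unfolding adj_rel_iff by blast
    then show thesis using that(1,3) by (cases "i = j") auto
  qed
qed

section \<open>Sign\<close>

lemma permutation_perms: "\<sigma> \<in> perms n \<Longrightarrow> permutation \<sigma>"
  unfolding perms_def by (blast intro: permutes_imp_permutation finite_atLeastAtMost)

lemma permutation_comp_adj_swap: "permutation \<sigma> \<Longrightarrow> permutation (\<sigma> \<circ> adj_swap i)"
  by (simp add: adj_swap_def permutation_compose permutation_swap_id)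

lemma evenperm_comp_adj_swap: "permutation \<sigma> \<Longrightarrow> evenperm (\<sigma> \<circ> adj_swap i) \<longleftrightarrow> \<not> evenperm \<sigma>"
  by (simp add: adj_swap_def evenperm_comp evenperm_swap permutation_swap_id)

lemma adj_rel_if_evenperm_ne:
  assumes "\<sigma> \<in> perms n" "\<pi> \<in> perms n" "dK n \<sigma> \<pi> \<le> 2" "evenperm \<sigma> \<noteq> evenperm \<pi>"
  shows "(\<sigma>, \<pi>) \<in> adj_rel n"
  using assms(1-3)
proof (cases rule: dK_le_2_cases)
  case (3 i j)
  then show ?thesis using assms(4) permutation_perms[OF assms(1)]
    by (simp add: evenperm_comp_adj_swap permutation_comp_adj_swap)
qed (use assms(4) in auto)

lemma two_adj_swaps_if_evenperm_eq:
  assumes "\<sigma> \<in> perms n" "\<pi> \<in> perms n" "dK n \<sigma> \<pi> \<le> 2" "\<sigma> \<noteq> \<pi>" "evenperm \<sigma> = evenperm \<pi>"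
  obtains i j where "1 \<le> i" "i \<le> n - 1" "1 \<le> j" "j \<le> n - 1" "i \<noteq> j"
    "\<pi> = \<sigma> \<circ> adj_swap i \<circ> adj_swap j"
  using assms(1-3)
proof (cases rule: dK_le_2_cases)
  case 2
  then show ?thesis using assms(5) permutation_perms[OF assms(1)]
    by (auto simp: adj_rel_iff evenperm_comp_adj_swap)
qed (use assms(4) that in auto)

text \<open>For \<open>i \<noteq> j\<close> the least and greatest points moved by \<open>adj_swap i \<circ> adj_swap j\<close> are
  \<open>min i j\<close> and \<open>Suc (max i j)\<close>; comparing them on both sides gives \<open>{i, j} = {k, l}\<close>.\<close>

lemma adj_swap_comp_eq_imp:
  assumes "adj_swap i \<circ> adj_swap j = adj_swap k \<circ> adj_swap l" "i \<noteq> j"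
  shows "k = i \<or> k = j"
proof -
  have lower: "min i j \<le> t" and upper: "t \<le> Suc (max i j)"
    if "i \<noteq> j" "adj_swap i (adj_swap j t) \<noteq> t" for i j t
    using that by (auto simp: adj_swap_apply split: if_splits)
  have min_moved: "adj_swap i (adj_swap j (min i j)) \<noteq> min i j"
    and max_moved: "adj_swap i (adj_swap j (Suc (max i j))) \<noteq> Suc (max i j)" if "i \<noteq> j" for i j
    using that by (auto simp: adj_swap_apply min_def max_def split: if_splits)
  have eq: "adj_swap i (adj_swap j t) = adj_swap k (adj_swap l t)" for t
    using assms(1) by (metis comp_apply)
  have "k \<noteq> l" using eq[of "min i j"] min_moved[OF assms(2)] by auto
  have "min i j \<le> min k l"
    using lower[OF assms(2), of "min k l"] min_moved[OF \<open>k \<noteq> l\<close>] eq[of "min k l"] by metis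
  moreover have "min k l \<le> min i j"
    using lower[OF \<open>k \<noteq> l\<close>, of "min i j"] min_moved[OF assms(2)] eq[of "min i j"] by metis
  moreover have "max i j \<le> max k l"
    using upper[OF \<open>k \<noteq> l\<close>, of "Suc (max i j)"] max_moved[OF assms(2)] eq[of "Suc (max i j)"]
      by simp
  moreover have "max k l \<le> max i j"
    using upper[OF assms(2), of "Suc (max k l)"] max_moved[OF \<open>k \<noteq> l\<close>] eq[of "Suc (max k l)"]
      by simp
  ultimately show ?thesis by (cases "i \<le> j"; cases "k \<le> l") (auto simp: min_def max_def)
qed

lemma card_common_neighbours_le_2:
  assumes "\<sigma> \<in> perms n" "\<sigma> \<noteq> \<pi>" "\<And>\<rho>. \<rho> \<in> B \<Longrightarrow> (\<sigma>, \<rho>) \<in> adj_rel n \<and> (\<rho>, \<pi>) \<in> adj_rel n"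
  shows "card B \<le> 2"
proof (cases "B = {}")
  case False
  then obtain i j where ij: "\<pi> = \<sigma> \<circ> adj_swap i \<circ> adj_swap j"
    using assms(3) unfolding adj_rel_iff by blast
  with assms(2) have "i \<noteq> j" by auto
  have "B \<subseteq> {\<sigma> \<circ> adj_swap i, \<sigma> \<circ> adj_swap j}"
  proof
    fix \<rho> assume "\<rho> \<in> B"
    then obtain k l where kl: "\<rho> = \<sigma> \<circ> adj_swap k" "\<pi> = \<rho> \<circ> adj_swap l"
      using assms(3) unfolding adj_rel_iff by blast
    then have "\<sigma> \<circ> (adj_swap k \<circ> adj_swap l) = \<sigma> \<circ> (adj_swap i \<circ> adj_swap j)"
      using ij by (simp add: o_assoc)
    then have "adj_swap i \<circ> adj_swap j = adj_swap k \<circ> adj_swap l"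
      using inj_perms[OF assms(1)] by (auto simp: fun_eq_iff inj_eq)
    then have "k = i \<or> k = j" using adj_swap_comp_eq_imp \<open>i \<noteq> j\<close> by blast
    then show "\<rho> \<in> {\<sigma> \<circ> adj_swap i, \<sigma> \<circ> adj_swap j}" using kl(1) by blast
  qed
  then have "card B \<le> card {\<sigma> \<circ> adj_swap i, \<sigma> \<circ> adj_swap j}" by (intro card_mono) auto
  also have "\<dots> \<le> 2" by (simp add: card_insert_if)
  finally show ?thesis .
qed simp

section \<open>Inversion sets\<close>

text \<open>Inversions are recorded as pairs of \<^emph>\<open>values\<close>: composing on the right with \<open>adj_swap i\<close>
  exchanges two positions, which toggles exactly the pair of values stored there.\<close>

definition inversions :: "(nat \<Rightarrow> nat) \<Rightarrow> (nat \<times> nat) set" where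
  "inversions \<sigma> = {(u, v). u < v \<and> inv \<sigma> v < inv \<sigma> u}"

definition sorted_pair :: "nat \<Rightarrow> nat \<Rightarrow> nat \<times> nat" where
  "sorted_pair u v = (min u v, max u v)"

lemma sorted_pair_eq_iff:
  "sorted_pair u v = sorted_pair u' v' \<longleftrightarrow> (u = u' \<and> v = v') \<or> (u = v' \<and> v = u')"
  by (auto simp: sorted_pair_def min_def max_def)

lemma inversions_comp_adj_swap:
  assumes "bij \<sigma>"
  shows "inversions (\<sigma> \<circ> adj_swap i) = sym_diff (inversions \<sigma>) {sorted_pair (\<sigma> i) (\<sigma> (Suc i))}"
proof (rule set_eqI)
  fix p :: "nat \<times> nat"
  obtain u v where p: "p = (u, v)" by fastforce
  have inj: "inj \<sigma>" using assms bij_is_inj by blast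
  have inv_comp: "inv (\<sigma> \<circ> adj_swap i) = adj_swap i \<circ> inv \<sigma>"
    using assms by (simp add: o_inv_distrib adj_swap_def)
  show "p \<in> inversions (\<sigma> \<circ> adj_swap i) \<longleftrightarrow>
      p \<in> sym_diff (inversions \<sigma>) {sorted_pair (\<sigma> i) (\<sigma> (Suc i))}"
  proof (cases "u < v")
    case False
    have "\<sigma> i \<noteq> \<sigma> (Suc i)" using inj by (simp add: inj_eq)
    with False show ?thesis by (auto simp: p inversions_def sorted_pair_def min_def max_def)
  next
    case True
    define a b where "a = inv \<sigma> u" and "b = inv \<sigma> v"
    have "\<sigma> a = u" "\<sigma> b = v"
      unfolding a_def b_def using assms by (simp_all add: bij_is_surj surj_f_inv_f)
    with True have ab: "\<sigma> a = u" "\<sigma> b = v" "a \<noteq> b" by auto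
    have "(u, v) = sorted_pair (\<sigma> i) (\<sigma> (Suc i)) \<longleftrightarrow>
        (u = \<sigma> i \<and> v = \<sigma> (Suc i)) \<or> (u = \<sigma> (Suc i) \<and> v = \<sigma> i)"
      using True by (auto simp: sorted_pair_def min_def max_def)
    also have "\<dots> \<longleftrightarrow> (a = i \<and> b = Suc i) \<or> (a = Suc i \<and> b = i)"
      using ab inj by (auto simp: inj_eq)
    finally have swapped: "(u, v) = sorted_pair (\<sigma> i) (\<sigma> (Suc i)) \<longleftrightarrow>
        (a = i \<and> b = Suc i) \<or> (a = Suc i \<and> b = i)" .
    have "p \<in> inversions (\<sigma> \<circ> adj_swap i) \<longleftrightarrow> adj_swap i b < adj_swap i a"
      using True by (simp add: p inversions_def inv_comp a_def b_def)
    moreover have "p \<in> sym_diff (inversions \<sigma>) {sorted_pair (\<sigma> i) (\<sigma> (Suc i))} \<longleftrightarrow>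
        (b < a) \<noteq> ((u, v) = sorted_pair (\<sigma> i) (\<sigma> (Suc i)))"
      using True by (auto simp: p inversions_def a_def b_def)
    ultimately show ?thesis unfolding swapped using ab(3) by (auto simp: adj_swap_apply)
  qed
qed

lemma sorted_pair_ne_two_adj_swaps:
  assumes "inj \<sigma>" "i \<noteq> j"
  shows "sorted_pair (\<sigma> i) (\<sigma> (Suc i)) \<noteq> sorted_pair (\<sigma> (adj_swap i j)) (\<sigma> (adj_swap i (Suc j)))"
proof -
  have "\<not> ((i = adj_swap i j \<and> Suc i = adj_swap i (Suc j)) \<or>
      (i = adj_swap i (Suc j) \<and> Suc i = adj_swap i j))"
    using assms(2) by (auto simp: adj_swap_apply split: if_splits)
  then show ?thesis using assms(1) by (simp add: sorted_pair_eq_iff inj_eq)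
qed

lemma sym_diff_sym_diff_singletons: "p \<noteq> q \<Longrightarrow> sym_diff X (sym_diff (sym_diff X {p}) {q}) = {p, q}"
  by auto

lemma sym_diff_inversions_two_adj_swaps:
  assumes "bij \<sigma>" "i \<noteq> j"
  shows "sym_diff (inversions \<sigma>) (inversions (\<sigma> \<circ> adj_swap i \<circ> adj_swap j)) =
    {sorted_pair (\<sigma> i) (\<sigma> (Suc i)), sorted_pair (\<sigma> (adj_swap i j)) (\<sigma> (adj_swap i (Suc j)))}"
    (is "_ = {?p, ?q}")
proof -
  have "bij (\<sigma> \<circ> adj_swap i)" using assms(1) by (simp add: adj_swap_def bij_comp)
  then have two_steps:
      "inversions (\<sigma> \<circ> adj_swap i \<circ> adj_swap j) = sym_diff (sym_diff (inversions \<sigma>) {?p}) {?q}"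
    by (simp only: inversions_comp_adj_swap[OF assms(1)] inversions_comp_adj_swap comp_apply)
  have "?p \<noteq> ?q" using sorted_pair_ne_two_adj_swaps[OF bij_is_inj[OF assms(1)] assms(2)] .
  then show ?thesis unfolding two_steps by (rule sym_diff_sym_diff_singletons)
qed

lemma card_sym_diff:
  assumes "finite X" "finite Y"
  shows "card (sym_diff X Y) + 2 * card (X \<inter> Y) = card X + card Y"
proof -
  have "card (sym_diff X Y) = card (X - Y) + card (Y - X)"
    using assms by (simp add: card_Un_disjoint Diff_Int_distrib2 disjoint_iff)
  moreover have "card (X - Y) + card (X \<inter> Y) = card X" "card (Y - X) + card (X \<inter> Y) = card Y"
    using card_Int_Diff[OF assms(1), of Y] card_Int_Diff[OF assms(2), of X]
      by (simp_all add: Int_commute)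
  ultimately show ?thesis by linarith
qed

text \<open>Without a common point, three of the sets form a triangle \<open>{p, q}, {q, r}, {p, r}\<close>,
  and no further two-element set meets each of them in exactly one point.\<close>

lemma ex_common_point_if_pairwise_meet_once:
  assumes "finite F" "4 \<le> card F" "\<forall>X\<in>F. card X = 2"
    "\<forall>X\<in>F. \<forall>Y\<in>F. X \<noteq> Y \<longrightarrow> card (X \<inter> Y) = 1"
  shows "\<exists>p. \<forall>X\<in>F. p \<in> X"
proof (rule ccontr)
  assume no_common: "\<not> ?thesis"
  have meet_once: "(a \<in> Z) \<noteq> (b \<in> Z)" if "a \<noteq> b" "card (Z \<inter> {a, b}) = 1" for a b and Z :: "'a set"
    using that by (cases "a \<in> Z"; cases "b \<in> Z") (auto simp: Int_insert_right)
  obtain X where X: "X \<in> F" using assms(2) by fastforce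
  then obtain p q where pq: "X = {p, q}" "p \<noteq> q" using assms(3) by (meson card_2_iff)
  obtain Y1 where Y1: "Y1 \<in> F" "p \<notin> Y1" using no_common by blast
  obtain Y2 where Y2: "Y2 \<in> F" "q \<notin> Y2" using no_common by blast
  have "Y1 \<noteq> X" "Y2 \<noteq> X" using Y1 Y2 pq by auto
  then have "card (Y1 \<inter> X) = 1" "card (Y2 \<inter> X) = 1" using assms(4) X Y1(1) Y2(1) by blast+
  then have "card (Y1 \<inter> {p, q}) = 1" "card (Y2 \<inter> {p, q}) = 1" by (simp_all add: pq(1))
  then have "q \<in> Y1" "p \<in> Y2" using meet_once[OF pq(2)] Y1 Y2 by blast+
  then obtain r where r: "Y1 = {q, r}" "r \<noteq> q"
    using assms(3) Y1 by (metis card_2_iff insert_commute insertE singletonD)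
  have "r \<noteq> p" using r Y1 by auto
  have "Y1 \<noteq> Y2" using Y1 \<open>p \<in> Y2\<close> by auto
  then have "card (Y2 \<inter> Y1) = 1" using assms(4) Y1(1) Y2(1) by blast
  then have "card (Y2 \<inter> {q, r}) = 1" by (simp add: r(1))
  then have "r \<in> Y2" using meet_once[OF r(2)[symmetric]] Y2 by blast
  have "Y2 = {p, r}"
  proof -
    have "finite Y2" "card Y2 = 2" using assms(3) Y2 card.infinite by fastforce+
    moreover have "{p, r} \<subseteq> Y2" "card {p, r} = 2" using \<open>p \<in> Y2\<close> \<open>r \<in> Y2\<close> \<open>r \<noteq> p\<close> by auto
    ultimately show ?thesis by (metis card_subset_eq)
  qed
  have "F \<subseteq> {X, Y1, Y2}"
  proof
    fix Z assume Z: "Z \<in> F"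
    show "Z \<in> {X, Y1, Y2}"
    proof (rule ccontr)
      assume "Z \<notin> {X, Y1, Y2}"
      then have "card (Z \<inter> X) = 1" "card (Z \<inter> Y1) = 1" "card (Z \<inter> Y2) = 1"
        using assms(4) Z X Y1(1) Y2(1) by blast+
      then have "card (Z \<inter> {p, q}) = 1" "card (Z \<inter> {q, r}) = 1" "card (Z \<inter> {p, r}) = 1"
        by (simp_all add: pq(1) r(1) \<open>Y2 = {p, r}\<close>)
      then have "(p \<in> Z) \<noteq> (q \<in> Z)" "(q \<in> Z) \<noteq> (r \<in> Z)" "(p \<in> Z) \<noteq> (r \<in> Z)"
        using meet_once pq(2) r(2) \<open>r \<noteq> p\<close> by (metis, metis, metis)
      then show False by blast
    qed
  qed
  then have "card F \<le> card {X, Y1, Y2}" by (intro card_mono) auto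
  also have "\<dots> \<le> 3" by (simp add: card_insert_if)
  finally show False using assms(2) by linarith
qed

lemma adjacent_pair_mem_two_adj_swaps:
  assumes "inj \<sigma>" "i \<noteq> j"
    "sorted_pair (\<sigma> k) (\<sigma> (Suc k)) \<in>
      {sorted_pair (\<sigma> i) (\<sigma> (Suc i)), sorted_pair (\<sigma> (adj_swap i j)) (\<sigma> (adj_swap i (Suc j)))}"
  shows "\<exists>l. {k, l} = {i, j} \<and> \<sigma> \<circ> adj_swap i \<circ> adj_swap j = \<sigma> \<circ> adj_swap k \<circ> adj_swap l"
  using assms(3)
proof
  assume "sorted_pair (\<sigma> k) (\<sigma> (Suc k)) = sorted_pair (\<sigma> i) (\<sigma> (Suc i))"
  then have "k = i" using assms(1) by (auto simp: sorted_pair_eq_iff inj_eq)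
  then show ?thesis by blast
next
  assume "sorted_pair (\<sigma> k) (\<sigma> (Suc k)) \<in> {sorted_pair (\<sigma> (adj_swap i j)) (\<sigma> (adj_swap i (Suc j)))}"
  then have "(adj_swap i j = k \<and> adj_swap i (Suc j) = Suc k) \<or>
      (adj_swap i j = Suc k \<and> adj_swap i (Suc j) = k)"
    using assms(1) by (auto simp: sorted_pair_eq_iff inj_eq)
  then have "j = k" "adj_swap i \<circ> adj_swap j = adj_swap j \<circ> adj_swap i"
    using assms(2) by (auto simp: adj_swap_apply fun_eq_iff split: if_splits)
  then show ?thesis by (intro exI[of _ i]) (simp add: comp_assoc insert_commute)
qed

lemma nonadjacent_pair_mem_two_adj_swaps:
  assumes "inj \<sigma>" "i \<noteq> j"
    "p \<in> {sorted_pair (\<sigma> i) (\<sigma> (Suc i)), sorted_pair (\<sigma> (adj_swap i j)) (\<sigma> (adj_swap i (Suc j)))}"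
    "\<forall>k. p \<noteq> sorted_pair (\<sigma> k) (\<sigma> (Suc k))"
  shows "\<exists>m. p = sorted_pair (\<sigma> m) (\<sigma> (Suc (Suc m))) \<and>
    (\<sigma> \<circ> adj_swap i \<circ> adj_swap j = \<sigma> \<circ> adj_swap m \<circ> adj_swap (Suc m) \<or>
     \<sigma> \<circ> adj_swap i \<circ> adj_swap j = \<sigma> \<circ> adj_swap (Suc m) \<circ> adj_swap m)"
proof -
  have p: "p = sorted_pair (\<sigma> (adj_swap i j)) (\<sigma> (adj_swap i (Suc j)))" using assms(3,4) by blast
  consider "j = Suc i" | "i = Suc j" | "adj_swap i j = j" "adj_swap i (Suc j) = Suc j"
    using assms(2) by (cases "j = Suc i \<or> i = Suc j") (auto simp: adj_swap_apply)
  then show ?thesis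
  proof cases
    case 1
    then show ?thesis by (intro exI[of _ i]) (simp add: p adj_swap_apply)
  next
    case 2
    then show ?thesis by (intro exI[of _ j]) (simp add: p adj_swap_apply)
  next
    case 3
    then show ?thesis using p assms(4) by simp
  qed
qed

section \<open>Anticodes of diameter two\<close>

lemma anticode_evenperm_const_two_adj_swaps:
  assumes "anticode n 2 A" "\<forall>\<sigma>\<in>A. \<forall>\<pi>\<in>A. evenperm \<sigma> = evenperm \<pi>" "\<sigma> \<in> A" "\<pi> \<in> A" "\<sigma> \<noteq> \<pi>"
  obtains i j where "1 \<le> i" "i \<le> n - 1" "1 \<le> j" "j \<le> n - 1" "i \<noteq> j"
    "\<pi> = \<sigma> \<circ> adj_swap i \<circ> adj_swap j"
    "sym_diff (inversions \<sigma>) (inversions \<pi>) =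
      {sorted_pair (\<sigma> i) (\<sigma> (Suc i)), sorted_pair (\<sigma> (adj_swap i j)) (\<sigma> (adj_swap i (Suc j)))}"
proof -
  have \<sigma>: "\<sigma> \<in> perms n" and "\<pi> \<in> perms n" "dK n \<sigma> \<pi> \<le> 2"
    using anticodeD[OF assms(1,3,4)] by simp_all
  moreover have "evenperm \<sigma> = evenperm \<pi>" using assms(2-4) by blast
  ultimately obtain i j where ij: "1 \<le> i" "i \<le> n - 1" "1 \<le> j" "j \<le> n - 1" "i \<noteq> j"
    "\<pi> = \<sigma> \<circ> adj_swap i \<circ> adj_swap j"
    using two_adj_swaps_if_evenperm_eq[OF _ _ _ assms(5)] by blast
  moreover have "sym_diff (inversions \<sigma>) (inversions \<pi>) =
      {sorted_pair (\<sigma> i) (\<sigma> (Suc i)), sorted_pair (\<sigma> (adj_swap i j)) (\<sigma> (adj_swap i (Suc j)))}"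
    unfolding ij(6) by (rule sym_diff_inversions_two_adj_swaps[OF bij_perms[OF \<sigma>] ij(5)])
  ultimately show thesis by (rule that)
qed

text \<open>Let \<open>D b\<close> be the symmetric difference of the inversion sets of \<open>a\<close> and \<open>b\<close>. For distinct
  \<open>b, c \<in> A - {a}\<close> the sets \<open>D b\<close>, \<open>D c\<close> have two elements and their symmetric difference is
  the one of \<open>b\<close> and \<open>c\<close>, again of size two; so they meet in exactly one pair.\<close>

lemma ex_common_inversion:
  assumes "anticode n 2 A" "a \<in> A" "5 \<le> card A" "\<forall>\<sigma>\<in>A. \<forall>\<pi>\<in>A. evenperm \<sigma> = evenperm \<pi>"
  shows "\<exists>p. \<forall>b\<in>A - {a}. p \<in> sym_diff (inversions a) (inversions b)"
proof -
  define D where "D b = sym_diff (inversions a) (inversions b)" for b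
  have card_2: "card (sym_diff (inversions \<sigma>) (inversions \<pi>)) = 2"
    if \<sigma>\<pi>: "\<sigma> \<in> A" "\<pi> \<in> A" "\<sigma> \<noteq> \<pi>" for \<sigma> \<pi>
  proof -
    obtain i j where "1 \<le> i" "i \<le> n - 1" "1 \<le> j" "j \<le> n - 1" "i \<noteq> j"
      "\<pi> = \<sigma> \<circ> adj_swap i \<circ> adj_swap j" and diff: "sym_diff (inversions \<sigma>) (inversions \<pi>) =
        {sorted_pair (\<sigma> i) (\<sigma> (Suc i)), sorted_pair (\<sigma> (adj_swap i j)) (\<sigma> (adj_swap i (Suc j)))}"
      by (rule anticode_evenperm_const_two_adj_swaps[OF assms(1,4) \<sigma>\<pi>])
    have "inj \<sigma>" using anticodeD[OF assms(1) \<sigma>\<pi>(1,1)] inj_perms by blast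
    with \<open>i \<noteq> j\<close> show ?thesis unfolding diff using sorted_pair_ne_two_adj_swaps by simp
  qed
  have D_sym_diff: "sym_diff (D b) (D c) = sym_diff (inversions b) (inversions c)" for b c
    unfolding D_def by auto
  have card_D: "card (D b) = 2" if "b \<in> A - {a}" for b
    using card_2[of a b] that assms(2) unfolding D_def by auto
  then have finite_D: "finite (D b)" if "b \<in> A - {a}" for b
    using that by (metis card.infinite zero_neq_numeral)
  have meet_once: "card (D b \<inter> D c) = 1" if "b \<in> A - {a}" "c \<in> A - {a}" "b \<noteq> c" for b c
    using card_sym_diff[OF finite_D[OF that(1)] finite_D[OF that(2)]] card_2[of b c]
      card_D[OF that(1)] card_D[OF that(2)] that D_sym_diff[of b c] by simp
  have "inj_on D (A - {a})"
  proof (rule inj_onI)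
    fix b c assume "b \<in> A - {a}" "c \<in> A - {a}" "D b = D c"
    then show "b = c" using card_2[of b c] D_sym_diff[of b c] by fastforce
  qed
  moreover have "finite A" using assms(3) by (intro card_ge_0_finite) linarith
  ultimately have card_F: "card (D ` (A - {a})) = card A - 1"
    using assms(2) by (simp add: card_image)
  have "\<exists>p. \<forall>X\<in>D ` (A - {a}). p \<in> X"
  proof (rule ex_common_point_if_pairwise_meet_once)
    show "finite (D ` (A - {a}))" using \<open>finite A\<close> by simp
    show "4 \<le> card (D ` (A - {a}))" using card_F assms(3) by linarith
    show "\<forall>X\<in>D ` (A - {a}). card X = 2" using card_D by blast
    show "\<forall>X\<in>D ` (A - {a}). \<forall>Y\<in>D ` (A - {a}). X \<noteq> Y \<longrightarrow> card (X \<inter> Y) = 1"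
      using meet_once by fastforce
  qed
  then obtain p where "\<forall>b\<in>A - {a}. p \<in> D b" by blast
  then show ?thesis unfolding D_def by (rule exI)
qed

lemma anticode_subset_sphere_K_1_if_adjacent_inversion:
  assumes "anticode n 2 A" "\<forall>\<sigma>\<in>A. \<forall>\<pi>\<in>A. evenperm \<sigma> = evenperm \<pi>" "a \<in> A" "A - {a} \<noteq> {}"
    "\<forall>b\<in>A - {a}. sorted_pair (a k) (a (Suc k)) \<in> sym_diff (inversions a) (inversions b)"
  shows "a \<circ> adj_swap k \<in> perms n" "A \<subseteq> sphere_K n (a \<circ> adj_swap k) 1"
proof -
  have "a \<in> perms n" using anticodeD[OF assms(1,3,3)] by simp
  have via_k: "1 \<le> k \<and> k \<le> n - 1 \<and> (a \<circ> adj_swap k, b) \<in> adj_rel n" if b: "b \<in> A - {a}" for b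
  proof -
    have "b \<in> A" "a \<noteq> b" using b by auto
    obtain i j where ij: "1 \<le> i" "i \<le> n - 1" "1 \<le> j" "j \<le> n - 1" "i \<noteq> j"
      "b = a \<circ> adj_swap i \<circ> adj_swap j" and diff: "sym_diff (inversions a) (inversions b) =
        {sorted_pair (a i) (a (Suc i)), sorted_pair (a (adj_swap i j)) (a (adj_swap i (Suc j)))}"
      by (rule anticode_evenperm_const_two_adj_swaps[OF assms(1,2,3) \<open>b \<in> A\<close> \<open>a \<noteq> b\<close>])
    have "sorted_pair (a k) (a (Suc k)) \<in> sym_diff (inversions a) (inversions b)"
      using assms(5) b by blast
    then have ij_7: "sorted_pair (a k) (a (Suc k)) \<in>
        {sorted_pair (a i) (a (Suc i)), sorted_pair (a (adj_swap i j)) (a (adj_swap i (Suc j)))}"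
      unfolding diff .
    obtain l where "{k, l} = {i, j}" "a \<circ> adj_swap i \<circ> adj_swap j = a \<circ> adj_swap k \<circ> adj_swap l"
      using adjacent_pair_mem_two_adj_swaps[OF inj_perms[OF \<open>a \<in> perms n\<close>] ij(5) ij_7] by blast
    moreover from this(1) have "k \<in> {i, j}" "l \<in> {i, j}" by blast+
    ultimately show ?thesis using ij(1-4,6) unfolding adj_rel_iff by auto
  qed
  obtain b0 where "b0 \<in> A - {a}" using assms(4) by blast
  then have "1 \<le> k" "k \<le> n - 1" using via_k by simp_all
  then show z: "a \<circ> adj_swap k \<in> perms n" using perms_comp_adj_swap \<open>a \<in> perms n\<close> by blast
  show "A \<subseteq> sphere_K n (a \<circ> adj_swap k) 1"
  proof
    fix b assume "b \<in> A"
    have "(a \<circ> adj_swap k, a) \<in> adj_rel n"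
      using \<open>1 \<le> k\<close> \<open>k \<le> n - 1\<close> unfolding adj_rel_iff by (metis comp_adj_swap_adj_swap)
    then have "(a \<circ> adj_swap k, b) \<in> adj_rel n" using via_k \<open>b \<in> A\<close> by (cases "b = a") simp_all
    then show "b \<in> sphere_K n (a \<circ> adj_swap k) 1" using mem_sphere_K_1_iff[OF z] by blast
  qed
qed

lemma card_anticode_le_3_if_nonadjacent_inversion:
  assumes "anticode n 2 A" "\<forall>\<sigma>\<in>A. \<forall>\<pi>\<in>A. evenperm \<sigma> = evenperm \<pi>" "a \<in> A" "A - {a} \<noteq> {}"
    "\<forall>b\<in>A - {a}. p \<in> sym_diff (inversions a) (inversions b)" "\<forall>k. p \<noteq> sorted_pair (a k) (a (Suc k))"
  shows "card A \<le> 3"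
proof -
  have "inj a" using anticodeD[OF assms(1,3,3)] inj_perms by blast
  have via_m: "\<exists>m. p = sorted_pair (a m) (a (Suc (Suc m))) \<and>
      (b = a \<circ> adj_swap m \<circ> adj_swap (Suc m) \<or> b = a \<circ> adj_swap (Suc m) \<circ> adj_swap m)"
    if b: "b \<in> A - {a}" for b
  proof -
    have "b \<in> A" "a \<noteq> b" using b by auto
    then obtain i j where "1 \<le> i" "i \<le> n - 1" "1 \<le> j" "j \<le> n - 1" and ij: "i \<noteq> j"
      "b = a \<circ> adj_swap i \<circ> adj_swap j" and diff: "sym_diff (inversions a) (inversions b) =
        {sorted_pair (a i) (a (Suc i)), sorted_pair (a (adj_swap i j)) (a (adj_swap i (Suc j)))}"
      by (rule anticode_evenperm_const_two_adj_swaps[OF assms(1,2,3)])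
    have "p \<in> sym_diff (inversions a) (inversions b)" using assms(5) b by blast
    then have "p \<in>
        {sorted_pair (a i) (a (Suc i)), sorted_pair (a (adj_swap i j)) (a (adj_swap i (Suc j)))}"
      unfolding diff .
    from nonadjacent_pair_mem_two_adj_swaps[OF \<open>inj a\<close> ij(1) this assms(6)] show ?thesis
      unfolding ij(2) .
  qed
  obtain m where m: "p = sorted_pair (a m) (a (Suc (Suc m)))" using via_m assms(4) by blast
  have "A \<subseteq> {a, a \<circ> adj_swap m \<circ> adj_swap (Suc m), a \<circ> adj_swap (Suc m) \<circ> adj_swap m}"
  proof
    fix b assume "b \<in> A"
    show "b \<in> {a, a \<circ> adj_swap m \<circ> adj_swap (Suc m), a \<circ> adj_swap (Suc m) \<circ> adj_swap m}"
    proof (cases "b = a")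
      case False
      then obtain m' where "p = sorted_pair (a m') (a (Suc (Suc m')))"
        "b = a \<circ> adj_swap m' \<circ> adj_swap (Suc m') \<or> b = a \<circ> adj_swap (Suc m') \<circ> adj_swap m'"
        using via_m \<open>b \<in> A\<close> by blast
      moreover have "m' = m"
        using calculation(1) m \<open>inj a\<close> by (auto simp: sorted_pair_eq_iff inj_eq)
      ultimately show ?thesis by blast
    qed simp
  qed
  then have "card A \<le>
      card {a, a \<circ> adj_swap m \<circ> adj_swap (Suc m), a \<circ> adj_swap (Suc m) \<circ> adj_swap m}"
    by (intro card_mono) auto
  also have "\<dots> \<le> 3" by (simp add: card_insert_if)
  finally show ?thesis .
qed

lemma anticode_subset_sphere_K_1_if_evenperm_const:
  assumes "anticode n 2 A" "5 \<le> card A" "\<forall>\<sigma>\<in>A. \<forall>\<pi>\<in>A. evenperm \<sigma> = evenperm \<pi>"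
  shows "\<exists>z\<in>perms n. A \<subseteq> sphere_K n z 1"
proof -
  obtain a where "a \<in> A" using assms(2) by force
  have "A - {a} \<noteq> {}"
  proof
    assume "A - {a} = {}"
    then have "A = {a}" using \<open>a \<in> A\<close> by blast
    with assms(2) show False by simp
  qed
  obtain p where p: "\<forall>b\<in>A - {a}. p \<in> sym_diff (inversions a) (inversions b)"
    using ex_common_inversion[OF assms(1) \<open>a \<in> A\<close> assms(2,3)] by blast
  show ?thesis
  proof (cases "\<exists>k. p = sorted_pair (a k) (a (Suc k))")
    case True
    then obtain k where "p = sorted_pair (a k) (a (Suc k))" by blast
    with p have "\<forall>b\<in>A - {a}. sorted_pair (a k) (a (Suc k)) \<in> sym_diff (inversions a) (inversions b)"
      by simp
    from anticode_subset_sphere_K_1_if_adjacent_inversion[OF assms(1,3) \<open>a \<in> A\<close> \<open>A - {a} \<noteq> {}\<close> this]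
    show ?thesis by blast
  next
    case False
    then have "\<forall>k. p \<noteq> sorted_pair (a k) (a (Suc k))" by blast
    from card_anticode_le_3_if_nonadjacent_inversion[OF assms(1,3) \<open>a \<in> A\<close> \<open>A - {a} \<noteq> {}\<close> p this]
    show ?thesis using assms(2) by linarith
  qed
qed

lemma anticode_subset_sphere_K_1_if_evenperm_ne:
  assumes "anticode n 2 A" "z \<in> A" "\<forall>\<sigma>\<in>A - {z}. evenperm \<sigma> \<noteq> evenperm z"
  shows "A \<subseteq> sphere_K n z 1"
proof
  fix \<sigma> assume "\<sigma> \<in> A"
  then have "z \<in> perms n" "\<sigma> \<in> perms n" "dK n z \<sigma> \<le> 2"
    using anticodeD[OF assms(1) assms(2)] by simp_all
  moreover have "\<sigma> = z \<or> evenperm z \<noteq> evenperm \<sigma>" using assms(3) \<open>\<sigma> \<in> A\<close> by blast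
  ultimately have "\<sigma> = z \<or> (z, \<sigma>) \<in> adj_rel n" using adj_rel_if_evenperm_ne by blast
  then show "\<sigma> \<in> sphere_K n z 1" using mem_sphere_K_1_iff[OF \<open>z \<in> perms n\<close>] by blast
qed

lemma card_anticode_evenperm_ne_le_2:
  assumes "anticode n 2 A" "\<sigma> \<in> A" "\<pi> \<in> A" "\<sigma> \<noteq> \<pi>" "evenperm \<sigma> = evenperm \<pi>"
  shows "card {\<rho> \<in> A. evenperm \<rho> \<noteq> evenperm \<sigma>} \<le> 2"
proof (rule card_common_neighbours_le_2)
  show "\<sigma> \<in> perms n" using anticodeD[OF assms(1,2,2)] by simp
  show "\<sigma> \<noteq> \<pi>" by fact
  fix \<rho> assume "\<rho> \<in> {\<rho> \<in> A. evenperm \<rho> \<noteq> evenperm \<sigma>}"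
  then have "\<rho> \<in> A" "evenperm \<sigma> \<noteq> evenperm \<rho>" "evenperm \<rho> \<noteq> evenperm \<pi>" using assms(5) by auto
  then show "(\<sigma>, \<rho>) \<in> adj_rel n \<and> (\<rho>, \<pi>) \<in> adj_rel n"
    using anticodeD[OF assms(1) assms(2) \<open>\<rho> \<in> A\<close>] anticodeD[OF assms(1) \<open>\<rho> \<in> A\<close> assms(3)]
      adj_rel_if_evenperm_ne by blast
qed

lemma anticode_subset_sphere_K_1:
  assumes "anticode n 2 A" "5 \<le> card A"
  shows "\<exists>z\<in>perms n. A \<subseteq> sphere_K n z 1"
proof -
  obtain a where "a \<in> A" using assms(2) by force
  have "finite A" using assms(1) finite_perms finite_subset unfolding anticode_def by blast
  define Same where "Same = {\<rho> \<in> A. evenperm \<rho> = evenperm a}"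
  define Opp where "Opp = {\<rho> \<in> A. evenperm \<rho> \<noteq> evenperm a}"
  have z_in_perms: "z \<in> perms n" if "z \<in> A" for z using anticodeD[OF assms(1) that that] by simp
  consider "Opp = {}" | "Same = {a}" | z where "Opp = {z}"
    | "\<exists>e1\<in>Same. \<exists>e2\<in>Same. e1 \<noteq> e2" "\<exists>o1\<in>Opp. \<exists>o2\<in>Opp. o1 \<noteq> o2"
    using \<open>a \<in> A\<close> unfolding Same_def Opp_def by blast
  then show ?thesis
  proof cases
    case 1
    then have "\<forall>\<sigma>\<in>A. \<forall>\<pi>\<in>A. evenperm \<sigma> = evenperm \<pi>" unfolding Opp_def by blast
    then show ?thesis using anticode_subset_sphere_K_1_if_evenperm_const assms by blast
  next
    case 2
    then have "\<forall>\<sigma>\<in>A - {a}. evenperm \<sigma> \<noteq> evenperm a" unfolding Same_def by blast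
    then show ?thesis using anticode_subset_sphere_K_1_if_evenperm_ne[OF assms(1) \<open>a \<in> A\<close>]
      z_in_perms[OF \<open>a \<in> A\<close>] by blast
  next
    case (3 z)
    then have "z \<in> A" "\<forall>\<sigma>\<in>A - {z}. evenperm \<sigma> \<noteq> evenperm z" unfolding Opp_def by blast+
    then show ?thesis
      using anticode_subset_sphere_K_1_if_evenperm_ne[OF assms(1)] z_in_perms by blast
  next
    case 4
    then obtain e1 e2 o1 o2 where "e1 \<in> Same" "e2 \<in> Same" "e1 \<noteq> e2" "o1 \<in> Opp" "o2 \<in> Opp" "o1 \<noteq> o2"
      by blast
    have "e1 \<in> A" "e2 \<in> A" "evenperm e1 = evenperm e2"
      using \<open>e1 \<in> Same\<close> \<open>e2 \<in> Same\<close> unfolding Same_def by auto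
    then have "card {\<rho> \<in> A. evenperm \<rho> \<noteq> evenperm e1} \<le> 2"
      using card_anticode_evenperm_ne_le_2[OF assms(1)] \<open>e1 \<noteq> e2\<close> by blast
    moreover have "Opp = {\<rho> \<in> A. evenperm \<rho> \<noteq> evenperm e1}"
      using \<open>e1 \<in> Same\<close> unfolding Same_def Opp_def by auto
    moreover have "o1 \<in> A" "o2 \<in> A" "evenperm o1 = evenperm o2"
      using \<open>o1 \<in> Opp\<close> \<open>o2 \<in> Opp\<close> unfolding Opp_def by auto
    then have "card {\<rho> \<in> A. evenperm \<rho> \<noteq> evenperm o1} \<le> 2"
      using card_anticode_evenperm_ne_le_2[OF assms(1)] \<open>o1 \<noteq> o2\<close> by blast
    moreover have "Same = {\<rho> \<in> A. evenperm \<rho> \<noteq> evenperm o1}"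
      using \<open>o1 \<in> Opp\<close> unfolding Same_def Opp_def by auto
    ultimately have "card Opp \<le> 2" "card Same \<le> 2" by simp_all
    moreover have "A = Same \<union> Opp" "Same \<inter> Opp = {}" unfolding Same_def Opp_def by auto
    ultimately have "card A \<le> 4" using \<open>finite A\<close> card_Un_le[of Same Opp] by simp
    then show ?thesis using assms(2) by simp
  qed
qed

theorem theorem6:
  fixes n :: nat and A :: "(nat \<Rightarrow> nat) set"
  assumes "n \<ge> 5" and "optimal_anticode n 2 A"
  shows "(\<exists>\<sigma>\<in>perms n. A = sphere_K n \<sigma> 1) \<and> card A = n"
proof -
  have anticode: "anticode n 2 A" and maximal: "\<And>B. anticode n 2 B \<Longrightarrow> card B \<le> card A"
    using assms(2) unfolding optimal_anticode_def by auto
  have "id \<in> perms n" unfolding perms_def by (simp add: permutes_id)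
  then have "n \<le> card A"
    using maximal[OF anticode_sphere_K_1] card_sphere_K_1 assms(1) by fastforce
  then obtain z where z: "z \<in> perms n" "A \<subseteq> sphere_K n z 1"
    using anticode_subset_sphere_K_1[OF anticode] assms(1) by auto
  have "finite (sphere_K n z 1)" "card (sphere_K n z 1) = n"
    using finite_perms card_sphere_K_1[OF z(1)] assms(1) unfolding sphere_K_def by auto
  with z \<open>n \<le> card A\<close> show ?thesis by (metis card_mono card_subset_eq le_antisym)
qed

end
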